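(* Let $\mathbf{E}$ be the category whose objects are algebras and whose morphisms $A\to A'$ are the algebra epimorphisms (surjective unital algebra homomorphisms) $k:A\to A'$, with ordinary composition. Let $\mathbf{P}$ be the category whose objects are, for some $n\ge1$, nonzero finite-dimensional real vector spaces $P$ of real symmetric $n\times n$ matrices, and in which a morphism from $P$ ($n\times n$ matrices) to $P'$ ($n'\times n'$ matrices) is given by a real $n\times n'$ matrix $w$ with $ww^T$ nonsingular and $w^TPw\subseteq P'$; this morphism is denoted $w^T[\cdot]w$ and acts by $L\mapsto w^TLw$, and composition is composition of these maps (the composite of $w^T[\cdot]w:P\to P'$ followed by $w'^T[\cdot]w':P'\to P''$ is $(ww')^T[\cdot](ww')$). Define $F$ on objects by $F[A]=\mathfrak{u}_A$ and, for an epimorphism $k:A_1\to A_2$ (identified with its matrix), $F(k)=k^T[\cdot]k:\mathfrak{u}_{A_2}\to\mathfrak{u}_{A_1}$. Then for every epimorphism $k$ one has $k^T\mathfrak{u}_{A_2}k\subseteq\mathfrak{u}_{A_1}$ and $kk^T$ nonsingular, so $F(k)$ is a morphism of $\mathbf{P}$, and $F:\mathbf{E}\to\mathbf{P}$ is a contravariant functor.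
   Context: An "algebra" is a real finite-dimensional unital associative algebra with underlying vector space $\mathbb{R}^n$, standard basis, elements column vectors $s=(x_1,\dots,x_n)^T$ and $\mathbf{d}s=(dx_1,\dots,dx_n)^T$. An uncurling metric of $A$ is a real symmetric $n\times n$ matrix $L$ with $d\big((s^{-1})^TL\,\mathbf{d}s\big)=0$ on an open ball centered at $\mathbf{1}_A$ consisting only of units; the anti-rotor $\mathfrak{u}_A$ is the vector space of uncurling metrics (it is nonzero for every algebra). *)

theory Defs
  imports "HOL-Analysis.Analysis"
begin

text \<open>An algebra: a real finite-dimensional unital associative algebra on the
coordinate space real^'n (standard basis), given by its multiplication and unit.\<close>
definition is_algebra :: "(real^'n \<Rightarrow> real^'n \<Rightarrow> real^'n) \<Rightarrow> real^'n \<Rightarrow> bool" where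
  "is_algebra m e \<longleftrightarrow>
     (\<forall>x. linear (m x)) \<and> (\<forall>y. linear (\<lambda>x. m x y)) \<and>
     (\<forall>x y z. m (m x y) z = m x (m y z)) \<and>
     (\<forall>x. m e x = x \<and> m x e = x)"

definition alg_unit :: "(real^'n \<Rightarrow> real^'n \<Rightarrow> real^'n) \<Rightarrow> real^'n \<Rightarrow> real^'n \<Rightarrow> bool" where
  "alg_unit m e s \<longleftrightarrow> (\<exists>t. m s t = e \<and> m t s = e)"

definition alg_inv :: "(real^'n \<Rightarrow> real^'n \<Rightarrow> real^'n) \<Rightarrow> real^'n \<Rightarrow> real^'n \<Rightarrow> real^'n" where
  "alg_inv m e s = (THE t. m s t = e \<and> m t s = e)"

text \<open>Uncurling metric: symmetric L such that the 1-form (s^-1)^T L ds, whose coefficient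
vector at s is the row vector (s^-1)^T L, is closed (its Jacobian is symmetric, i.e.
d of the form vanishes) on some open ball around the unit consisting only of units.\<close>
definition uncurling_metric :: "(real^'n \<Rightarrow> real^'n \<Rightarrow> real^'n) \<Rightarrow> real^'n \<Rightarrow> real^'n^'n \<Rightarrow> bool" where
  "uncurling_metric m e L \<longleftrightarrow>
     transpose L = L \<and>
     (\<exists>r>0. ball e r \<subseteq> {s. alg_unit m e s} \<and>
        (\<forall>s\<in>ball e r. \<exists>D. ((\<lambda>x. alg_inv m e x v* L) has_derivative D) (at s) \<and>
                            (\<forall>u v. D u \<bullet> v = D v \<bullet> u)))"

definition anti_rotor :: "(real^'n \<Rightarrow> real^'n \<Rightarrow> real^'n) \<Rightarrow> real^'n \<Rightarrow> (real^'n^'n) set" where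
  "anti_rotor m e = {L. uncurling_metric m e L}"

definition alg_epi :: "(real^'a \<Rightarrow> real^'a \<Rightarrow> real^'a) \<Rightarrow> real^'a \<Rightarrow>
    (real^'b \<Rightarrow> real^'b \<Rightarrow> real^'b) \<Rightarrow> real^'b \<Rightarrow> real^'a^'b \<Rightarrow> bool" where
  "alg_epi m1 e1 m2 e2 k \<longleftrightarrow>
     surj (\<lambda>x. k *v x) \<and> k *v e1 = e2 \<and> (\<forall>x y. k *v m1 x y = m2 (k *v x) (k *v y))"

end

theory Submission
  imports Defs
begin

text \<open>A unital homomorphism k maps inverses to inverses, so near the unit the
form (s^-1)^T (k^T L k) ds is the pullback along the linear map k of the form
((k s)^-1)^T L d(k s). Pulling back preserves closedness, since a symmetric
Jacobian D becomes the symmetric k^T D k. Elements close to the unit are units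
because multiplication by 1 + h is injective for small h, and k k^T is
nonsingular because k is onto. The functor laws are matrix identities.\<close>

definition closed_form_at :: "('a::real_inner \<Rightarrow> 'a) \<Rightarrow> 'a \<Rightarrow> bool" where
  "closed_form_at \<omega> s \<longleftrightarrow> (\<exists>D. (\<omega> has_derivative D) (at s) \<and> (\<forall>u v. D u \<bullet> v = D v \<bullet> u))"

lemma closed_form_at_const: "closed_form_at (\<lambda>_. c) s"
  unfolding closed_form_at_def by (intro exI[of _ "\<lambda>_. 0"]) auto

lemma closed_form_at_add:
  assumes "closed_form_at f s" and "closed_form_at g s"
  shows "closed_form_at (\<lambda>x. f x + g x) s"
proof -
  obtain Df Dg where "(f has_derivative Df) (at s)" "\<And>u v. Df u \<bullet> v = Df v \<bullet> u"
    and "(g has_derivative Dg) (at s)" "\<And>u v. Dg u \<bullet> v = Dg v \<bullet> u"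
    using assms unfolding closed_form_at_def by blast
  then show ?thesis
    unfolding closed_form_at_def
    by (intro exI[of _ "\<lambda>u. Df u + Dg u"] conjI allI has_derivative_add)
      (simp_all add: inner_add_left)
qed

lemma closed_form_at_scaleR:
  assumes "closed_form_at f s"
  shows "closed_form_at (\<lambda>x. c *\<^sub>R f x) s"
proof -
  obtain D where "(f has_derivative D) (at s)" "\<And>u v. D u \<bullet> v = D v \<bullet> u"
    using assms unfolding closed_form_at_def by blast
  then show ?thesis
    unfolding closed_form_at_def
    by (intro exI[of _ "\<lambda>u. c *\<^sub>R D u"] conjI allI has_derivative_scaleR_right) simp_all
qed

lemma closed_form_at_transform_eventually:
  assumes "closed_form_at f s" and eq: "\<forall>\<^sub>F x in nhds s. f x = g x"
  shows "closed_form_at g s"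
proof -
  obtain D where D: "(f has_derivative D) (at s)" "\<And>u v. D u \<bullet> v = D v \<bullet> u"
    using assms(1) unfolding closed_form_at_def by blast
  have "\<forall>\<^sub>F x in at s. f x = g x"
    using eq by (simp add: eventually_at_filter eventually_mono)
  then have "(g has_derivative D) (at s)"
    using D(1) eventually_nhds_x_imp_x[OF eq] by (simp add: has_derivative_transform_eventually)
  with D(2) show ?thesis
    unfolding closed_form_at_def by blast
qed

lemma closed_form_at_pullback:
  fixes \<omega> :: "real^'m \<Rightarrow> real^'m" and k :: "real^'n^'m"
  assumes "closed_form_at \<omega> (k *v s)"
  shows "closed_form_at (\<lambda>x. \<omega> (k *v x) v* k) s"
proof -
  obtain D where D: "(\<omega> has_derivative D) (at (k *v s))" "\<And>u v. D u \<bullet> v = D v \<bullet> u"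
    using assms unfolding closed_form_at_def by blast
  have "((*v) k has_derivative (*v) k) (at s)"
    by (simp add: bounded_linear_imp_has_derivative)
  from has_derivative_compose[OF this D(1)]
  have "((\<lambda>x. \<omega> (k *v x)) has_derivative (\<lambda>u. D (k *v u))) (at s)"
    by (simp add: o_def)
  moreover have "bounded_linear (\<lambda>y::real^'m. y v* k)"
    unfolding transpose_matrix_vector[symmetric] by (rule matrix_vector_mul_bounded_linear)
  ultimately have "((\<lambda>x. \<omega> (k *v x) v* k) has_derivative (\<lambda>u. D (k *v u) v* k)) (at s)"
    by (rule bounded_linear.has_derivative[rotated])
  moreover have "(D (k *v u) v* k) \<bullet> v = (D (k *v v) v* k) \<bullet> u" for u v
    using D(2)[of "k *v u" "k *v v"] by (simp add: dot_lmul_matrix)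
  ultimately show ?thesis
    unfolding closed_form_at_def by blast
qed

lemma alg_inv_eqI:
  assumes A: "is_algebra m e" and st: "m s t = e" "m t s = e"
  shows "alg_inv m e s = t"
  unfolding alg_inv_def
proof (rule the_equality)
  fix t' assume t': "m s t' = e \<and> m t' s = e"
  then have "t' = m (m t' s) t"
    using A st unfolding is_algebra_def by metis
  then show "t' = t"
    using A t' unfolding is_algebra_def by metis
qed (use st in simp)

lemma alg_unit_if_inj_mult:
  assumes A: "is_algebra m e" and inj: "inj (m s)"
  shows "alg_unit m e s"
proof -
  have lin: "linear (m s)"
    using A unfolding is_algebra_def by blast
  obtain t where t: "m s t = e"
    using linear_inj_imp_surj[OF lin inj] by (metis surjD)
  have "m s (m t s) = m s e"
    using A t unfolding is_algebra_def by metis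
  then have "m t s = e"
    by (rule injD[OF inj])
  with t show ?thesis
    unfolding alg_unit_def by blast
qed

lemma eventually_alg_unit_nhds:
  assumes A: "is_algebra m e"
  shows "\<forall>\<^sub>F s in nhds e. alg_unit m e s"
proof -
  have "bilinear m"
    using A unfolding is_algebra_def bilinear_def by blast
  then obtain B where B: "B > 0" "\<And>x y. norm (m x y) \<le> B * norm x * norm y"
    using bilinear_bounded_pos by blast
  have "alg_unit m e s" if s: "dist s e < 1 / B" for s
  proof (rule alg_unit_if_inj_mult[OF A])
    have lin: "linear (m s)" "linear (\<lambda>x. m x y)" for y
      using A unfolding is_algebra_def by blast+
    show "inj (m s)"
    proof (rule linear_injective_0[THEN iffD2, OF lin(1)], intro allI impI)
      fix y assume "m s y = 0"
      moreover have "m s y = y + m (s - e) y"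
        using linear_add[OF lin(2), of e "s - e" y] A unfolding is_algebra_def by simp
      ultimately have "norm y \<le> B * norm (s - e) * norm y"
        using B(2)[of "s - e" y] by (simp add: add_eq_0_iff)
      moreover have "B * norm (s - e) < 1"
        using s B(1) by (simp add: dist_norm field_simps)
      ultimately show "y = 0"
        by (metis mult_le_cancel_right1 norm_eq_zero norm_ge_zero not_le order.not_eq_order_implies_strict)
    qed
  qed
  then show ?thesis
    unfolding eventually_nhds_metric using B(1) by (metis divide_pos_pos zero_less_one)
qed

lemma alg_epi_alg_inv:
  assumes A1: "is_algebra m1 e1" and A2: "is_algebra m2 e2"
    and k: "alg_epi m1 e1 m2 e2 k" and s: "alg_unit m1 e1 s"
  shows "k *v alg_inv m1 e1 s = alg_inv m2 e2 (k *v s)"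
proof -
  obtain t where t: "m1 s t = e1" "m1 t s = e1"
    using s unfolding alg_unit_def by blast
  then have "m2 (k *v s) (k *v t) = e2" "m2 (k *v t) (k *v s) = e2"
    using k unfolding alg_epi_def by metis+
  then show ?thesis
    using alg_inv_eqI[OF A1 t] alg_inv_eqI[OF A2] by metis
qed

lemma transpose_add: "transpose (A + B) = transpose A + transpose (B :: 'a::semiring_1^'n^'m)"
  by (simp add: transpose_def vec_eq_iff)

lemma mem_anti_rotor_iff:
  "L \<in> anti_rotor m e \<longleftrightarrow> transpose L = L \<and>
     (\<forall>\<^sub>F s in nhds e. alg_unit m e s \<and> closed_form_at (\<lambda>x. alg_inv m e x v* L) s)"
  unfolding anti_rotor_def uncurling_metric_def closed_form_at_def eventually_nhds_metric
    mem_Collect_eq subset_iff Ball_def mem_ball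
  by (simp add: dist_commute) blast

lemma zero_mem_anti_rotor:
  assumes "is_algebra m e"
  shows "0 \<in> anti_rotor m e"
proof -
  have "transpose (0 :: real^'n^'n) = 0"
    by (simp add: transpose_def vec_eq_iff)
  moreover have "(\<lambda>x. alg_inv m e x v* 0) = (\<lambda>_. 0 :: real^'n)"
    by (simp add: fun_eq_iff vec_eq_iff vector_matrix_mult_def)
  ultimately show ?thesis
    using eventually_alg_unit_nhds[OF assms]
    by (simp add: mem_anti_rotor_iff closed_form_at_const)
qed

lemma add_mem_anti_rotor:
  assumes "L1 \<in> anti_rotor m e" and "L2 \<in> anti_rotor m e"
  shows "L1 + L2 \<in> anti_rotor m e"
proof -
  have "transpose (L1 + L2) = L1 + L2"
    using assms by (simp add: mem_anti_rotor_iff transpose_add)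
  moreover from assms[unfolded mem_anti_rotor_iff, THEN conjunct2]
  have "\<forall>\<^sub>F s in nhds e. alg_unit m e s \<and> closed_form_at (\<lambda>x. alg_inv m e x v* (L1 + L2)) s"
    by (rule eventually_elim2) (simp add: vector_matrix_mult_add_rdistrib closed_form_at_add)
  ultimately show ?thesis
    by (simp add: mem_anti_rotor_iff)
qed

lemma scaleR_mem_anti_rotor:
  assumes "L \<in> anti_rotor m e"
  shows "c *\<^sub>R L \<in> anti_rotor m e"
proof -
  have "transpose (c *\<^sub>R L) = c *\<^sub>R L"
    using assms by (simp add: mem_anti_rotor_iff transpose_scalar)
  moreover from assms[unfolded mem_anti_rotor_iff, THEN conjunct2]
  have "\<forall>\<^sub>F s in nhds e. alg_unit m e s \<and> closed_form_at (\<lambda>x. alg_inv m e x v* (c *\<^sub>R L)) s"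
    by (rule eventually_mono) (simp add: vector_scaleR_matrix_ac closed_form_at_scaleR)
  ultimately show ?thesis
    by (simp add: mem_anti_rotor_iff)
qed

lemma subspace_anti_rotor: "is_algebra m e \<Longrightarrow> subspace (anti_rotor m e)"
  by (simp add: subspace_def zero_mem_anti_rotor add_mem_anti_rotor scaleR_mem_anti_rotor)

lemma alg_epi_pullback_anti_rotor:
  fixes k :: "real^'n1^'n2"
  assumes A1: "is_algebra m1 e1" and A2: "is_algebra m2 e2"
    and k: "alg_epi m1 e1 m2 e2 k" and L: "L \<in> anti_rotor m2 e2"
  shows "transpose k ** L ** k \<in> anti_rotor m1 e1"
proof -
  define \<omega> where "\<omega> x = alg_inv m2 e2 x v* L" for x
  have L_sym: "transpose L = L"
    and L_closed: "\<forall>\<^sub>F y in nhds e2. closed_form_at \<omega> y"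
    using L unfolding mem_anti_rotor_iff \<omega>_def
    by (auto elim: eventually_mono)
  have "((*v) k \<longlongrightarrow> e2) (nhds e1)"
    using k unfolding alg_epi_def
    by (metis linear_continuous_at matrix_vector_mul_bounded_linear
        continuous_at tendsto_at_iff_tendsto_nhds)
  then have "\<forall>\<^sub>F s in nhds e1. closed_form_at \<omega> (k *v s)"
    using L_closed by (rule eventually_compose_filterlim[rotated])
  moreover have "\<forall>\<^sub>F s in nhds e1. \<forall>\<^sub>F x in nhds s. alg_unit m1 e1 x"
    using eventually_alg_unit_nhds[OF A1] by (simp add: eventually_eventually)
  ultimately have "\<forall>\<^sub>F s in nhds e1. alg_unit m1 e1 s \<and>
      closed_form_at (\<lambda>x. alg_inv m1 e1 x v* (transpose k ** L ** k)) s"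
  proof eventually_elim
    case (elim s)
    have "\<forall>\<^sub>F x in nhds s. \<omega> (k *v x) v* k = alg_inv m1 e1 x v* (transpose k ** L ** k)"
      using elim(2) by eventually_elim
        (simp add: \<omega>_def alg_epi_alg_inv[OF A1 A2 k] vector_matrix_mul_assoc[symmetric])
    then have "closed_form_at (\<lambda>x. alg_inv m1 e1 x v* (transpose k ** L ** k)) s"
      by (rule closed_form_at_transform_eventually[OF closed_form_at_pullback[OF elim(1)]])
    moreover have "alg_unit m1 e1 s"
      using elim(2) by (rule eventually_nhds_x_imp_x)
    ultimately show ?case
      by blast
  qed
  moreover have "transpose (transpose k ** L ** k) = transpose k ** L ** k"
    using L_sym by (simp add: matrix_transpose_mul matrix_mul_assoc)
  ultimately show ?thesis
    unfolding mem_anti_rotor_iff by blast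
qed

lemma invertible_mult_transpose_if_surj:
  fixes k :: "real^'n^'m"
  assumes surj: "surj ((*v) k)"
  shows "invertible (k ** transpose k)"
proof -
  have "x = 0" if x: "(k ** transpose k) *v x = 0" for x
  proof -
    have "(x v* k) \<bullet> (x v* k) = x \<bullet> ((k ** transpose k) *v x)"
      by (simp add: dot_lmul_matrix matrix_vector_mul_assoc[symmetric])
    then have "x v* k = 0"
      using x by simp
    moreover obtain y where "x = k *v y"
      using surj by (metis surjD)
    then have "x \<bullet> x = (x v* k) \<bullet> y"
      by (simp add: dot_lmul_matrix)
    ultimately show "x = 0"
      by simp
  qed
  then have "inj ((*v) (k ** transpose k))"
    by (simp add: linear_injective_0)
  then show ?thesis
    using invertible_left_inverse matrix_left_invertible_injective by blast
qed

lemma alg_epi_id: "alg_epi m e m e (mat 1)"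
  unfolding alg_epi_def by simp

lemma alg_epi_mult:
  assumes "alg_epi m1 e1 m2 e2 k" and "alg_epi m2 e2 m3 e3 k'"
  shows "alg_epi m1 e1 m3 e3 (k' ** k)"
proof -
  have "(*v) (k' ** k) = (*v) k' \<circ> (*v) k"
    by (simp add: fun_eq_iff matrix_vector_mul_assoc)
  then show ?thesis
    using assms comp_surj unfolding alg_epi_def
    by (metis matrix_vector_mul_assoc)
qed

theorem theorem6p1:
  fixes m1 :: "real^'n1 \<Rightarrow> real^'n1 \<Rightarrow> real^'n1" and e1 :: "real^'n1"
    and m2 :: "real^'n2 \<Rightarrow> real^'n2 \<Rightarrow> real^'n2" and e2 :: "real^'n2"
    and k :: "real^'n1^'n2"
  assumes A1: "is_algebra m1 e1" and A2: "is_algebra m2 e2"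
    and epi: "alg_epi m1 e1 m2 e2 k"
  shows "(\<forall>L\<in>anti_rotor m2 e2. transpose k ** L ** k \<in> anti_rotor m1 e1)
       \<and> invertible (k ** transpose k)
       \<and> subspace (anti_rotor m1 e1) \<and> subspace (anti_rotor m2 e2)
       \<and> alg_epi m1 e1 m1 e1 (mat 1 :: real^'n1^'n1)
       \<and> (\<forall>L \<in> anti_rotor m1 e1. transpose (mat 1 :: real^'n1^'n1) ** L ** mat 1 = L)
       \<and> (\<forall>(m3 :: real^'n3 \<Rightarrow> real^'n3 \<Rightarrow> real^'n3) e3 (k' :: real^'n2^'n3).
            is_algebra m3 e3 \<and> alg_epi m2 e2 m3 e3 k' \<longrightarrow>
              alg_epi m1 e1 m3 e3 (k' ** k) \<and>
              (\<forall>L \<in> anti_rotor m3 e3.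
                 transpose (k' ** k) ** L ** (k' ** k)
                 = transpose k ** (transpose k' ** L ** k') ** k))"
proof (intro conjI ballI allI impI)
  show "transpose k ** L ** k \<in> anti_rotor m1 e1" if "L \<in> anti_rotor m2 e2" for L
    using alg_epi_pullback_anti_rotor[OF A1 A2 epi that] .
  show "invertible (k ** transpose k)"
    using epi invertible_mult_transpose_if_surj unfolding alg_epi_def by blast
  show "subspace (anti_rotor m1 e1)"
    using A1 by (rule subspace_anti_rotor)
  show "subspace (anti_rotor m2 e2)"
    using A2 by (rule subspace_anti_rotor)
  show "alg_epi m1 e1 m1 e1 (mat 1 :: real^'n1^'n1)"
    by (rule alg_epi_id)
  show "transpose (mat 1 :: real^'n1^'n1) ** L ** mat 1 = L" for L
    by simp
  show "alg_epi m1 e1 m3 e3 (k' ** k)" if "is_algebra m3 e3 \<and> alg_epi m2 e2 m3 e3 k'"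
    for m3 :: "real^'n3 \<Rightarrow> real^'n3 \<Rightarrow> real^'n3" and e3 k'
    using alg_epi_mult[OF epi] that by blast
  show "transpose (k' ** k) ** L ** (k' ** k) = transpose k ** (transpose k' ** L ** k') ** k"
    for k' :: "real^'n2^'n3" and L
    by (simp add: matrix_transpose_mul matrix_mul_assoc)
qed

end
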